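(* There exists a dichotomous hedonic game such that no finite sequence of IS deviations starting from the singleton partition ends in an individually stable partition.
   Context: A dichotomous hedonic game (DHG) on agents $N$ gives each agent $i$ a function $v_i$ from the coalitions containing $i$ to $\{0,1\}$ (approve/disapprove), and $i$ weakly prefers $C$ to $C'$ iff $v_i(C)\ge v_i(C')$. The singleton partition is $\{\{i\}:i\in N\}$. An IS deviation of agent $i$ from partition $\pi$ to $\pi'$ is a move of $i$ alone from $\pi(i)$ into another coalition of $\pi$ or into a new singleton such that $i$ strictly prefers $\pi'(i)$ to $\pi(i)$ and every $j\in\pi'(i)\setminus\{i\}$ weakly prefers $\pi'(j)$ to $\pi(j)$. A partition is individually stable (IS) if no IS deviation is possible from it. *)

theory Defs
  imports Main "HOL-Library.Disjoint_Sets"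
begin

text \<open>A dichotomous hedonic game on a finite agent set N (agents are naturals):
  v i C says whether agent i approves coalition C (only meaningful for i \<in> C \<subseteq> N).\<close>

type_synonym dhg = "nat \<Rightarrow> nat set \<Rightarrow> bool"

definition singleton_partition :: "nat set \<Rightarrow> nat set set" where
  "singleton_partition N = (\<lambda>i. {i}) ` N"

definition coal :: "nat set set \<Rightarrow> nat \<Rightarrow> nat set" where
  "coal P i = (THE C. C \<in> P \<and> i \<in> C)"

text \<open>Move agent i out of its coalition into coalition T (T = {} means a new singleton).\<close>
definition move :: "nat set set \<Rightarrow> nat \<Rightarrow> nat set \<Rightarrow> nat set set" where
  "move P i T = (P - {coal P i, T}) \<union> {insert i T}
      \<union> (if coal P i - {i} = {} then {} else {coal P i - {i}})"

text \<open>IS deviation from P to P'. Preferences are dichotomous: i strictly prefers C to C'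
  iff v i C and not v i C'; j weakly prefers C to C' iff v j C' implies v j C.\<close>
definition IS_deviation :: "nat set \<Rightarrow> dhg \<Rightarrow> nat set set \<Rightarrow> nat set set \<Rightarrow> bool" where
  "IS_deviation N v P P' \<longleftrightarrow>
     (\<exists>i\<in>N. \<exists>T \<in> (P - {coal P i}) \<union> {{}}.
        P' = move P i T \<and>
        v i (insert i T) \<and> \<not> v i (coal P i) \<and>
        (\<forall>j\<in>T. v j T \<longrightarrow> v j (insert i T)))"

definition individually_stable :: "nat set \<Rightarrow> dhg \<Rightarrow> nat set set \<Rightarrow> bool" where
  "individually_stable N v P \<longleftrightarrow> partition_on N P \<and> \<not> (\<exists>P'. IS_deviation N v P P')"

end

theory Submission
  imports Defs
begin

(* Three agents approve cyclically: agent 0 wants to be with 1 but not with 2, agent 1 wants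
   to be with 2, and agent 2 wants to be with 0 but not with 1. From the singleton partition
   the only reachable partitions are the singletons and the three "pair plus singleton"
   partitions, and in each of them some agent has an IS deviation (0 follows 1, 1 follows 2,
   2 follows 0). The grand coalition, which is individually stable, is never formed: agent 1
   is the only one approving it, and 1 joining {0, 2} is vetoed by agent 2, who approves
   {0, 2} but not {0, 1, 2}. *)

lemma coal_eqI:
  assumes "C \<in> P" "i \<in> C" "\<And>D. D \<in> P \<Longrightarrow> i \<in> D \<Longrightarrow> D = C"
  shows "coal P i = C"
  unfolding coal_def using assms by (intro the_equality) blast+

lemma IS_deviation_moveI:
  assumes "i \<in> N" "T \<in> P - {coal P i} \<or> T = {}"
    and "v i (insert i T)" "\<not> v i (coal P i)"
    and "\<And>j. j \<in> T \<Longrightarrow> v j T \<Longrightarrow> v j (insert i T)"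
  shows "IS_deviation N v P (move P i T)"
  unfolding IS_deviation_def using assms by blast

lemma reachable_not_individually_stable:
  assumes "(IS_deviation N v)\<^sup>*\<^sup>* P\<^sub>0 P" "P\<^sub>0 \<in> R"
    and closed: "\<And>P Q. P \<in> R \<Longrightarrow> IS_deviation N v P Q \<Longrightarrow> Q \<in> R"
    and unstable: "\<And>P. P \<in> R \<Longrightarrow> \<exists>Q. IS_deviation N v P Q"
  shows "\<not> individually_stable N v P"
proof -
  from assms(1,2) have "P \<in> R"
    by (induction rule: rtranclp_induct) (simp_all add: closed)
  then show ?thesis
    using unstable unfolding individually_stable_def by blast
qed

definition cyclic_game :: dhg where
  "cyclic_game i C \<longleftrightarrow>
     i = 0 \<and> 1 \<in> C \<and> 2 \<notin> C \<or> i = 1 \<and> 2 \<in> C \<or> i = 2 \<and> 0 \<in> C \<and> 1 \<notin> C"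

definition cyclic_game_reachable :: "nat set set set" where
  "cyclic_game_reachable = {{{0}, {1}, {2}}, {{0}, {1, 2}}, {{1}, {0, 2}}, {{2}, {0, 1}}}"

lemma coal_cyclic_game_reachable:
  "coal {{0}, {1}, {2}} 0 = {0}" "coal {{0}, {1}, {2}} 1 = {1}" "coal {{0}, {1}, {2}} 2 = {2}"
  "coal {{0}, {1, 2}} 0 = {0}" "coal {{0}, {1, 2}} 1 = {1, 2}" "coal {{0}, {1, 2}} 2 = {1, 2}"
  "coal {{1}, {0, 2}} 0 = {0, 2}" "coal {{1}, {0, 2}} 1 = {1}" "coal {{1}, {0, 2}} 2 = {0, 2}"
  "coal {{2}, {0, 1}} 0 = {0, 1}" "coal {{2}, {0, 1}} 1 = {0, 1}" "coal {{2}, {0, 1}} 2 = {2}"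
  by (rule coal_eqI; auto)+

lemma cyclic_game_deviation_closed:
  assumes "P \<in> cyclic_game_reachable" "IS_deviation {0, 1, 2} cyclic_game P Q"
  shows "Q \<in> cyclic_game_reachable"
proof -
  obtain i T where "i \<in> {0, 1, 2}" "T \<in> P - {coal P i} \<or> T = {}" "Q = move P i T"
    "cyclic_game i (insert i T)" "\<not> cyclic_game i (coal P i)"
    "\<forall>j\<in>T. cyclic_game j T \<longrightarrow> cyclic_game j (insert i T)"
    using assms(2) unfolding IS_deviation_def by blast
  with assms(1) show ?thesis
    unfolding cyclic_game_reachable_def
    by (simp only: insert_iff empty_iff simp_thms; elim disjE; hypsubst;
        simp only: coal_cyclic_game_reachable Diff_iff insert_iff empty_iff simp_thms;
        (elim disjE conjE)?; hypsubst?;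
        simp only: move_def coal_cyclic_game_reachable insert_iff empty_iff simp_thms;
        unfold cyclic_game_def; simp add: insert_Diff_if insert_commute)
qed

lemma cyclic_game_deviation_exists:
  assumes "P \<in> cyclic_game_reachable"
  shows "\<exists>Q. IS_deviation {0, 1, 2} cyclic_game P Q"
proof -
  have "IS_deviation {0, 1, 2} cyclic_game {{0}, {1}, {2}} (move {{0}, {1}, {2}} 1 {2})"
    "IS_deviation {0, 1, 2} cyclic_game {{0}, {1, 2}} (move {{0}, {1, 2}} 2 {0})"
    "IS_deviation {0, 1, 2} cyclic_game {{1}, {0, 2}} (move {{1}, {0, 2}} 0 {1})"
    "IS_deviation {0, 1, 2} cyclic_game {{2}, {0, 1}} (move {{2}, {0, 1}} 1 {2})"
    by (rule IS_deviation_moveI; (simp only: coal_cyclic_game_reachable)?; simp add: cyclic_game_def)+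
  with assms show ?thesis
    unfolding cyclic_game_reachable_def by blast
qed

theorem proposition6p1:
  shows "\<exists>(N :: nat set) (v :: dhg). finite N \<and>
           (\<forall>P. (IS_deviation N v)\<^sup>*\<^sup>* (singleton_partition N) P \<longrightarrow>
                \<not> individually_stable N v P)"
proof (intro exI conjI allI impI)
  show "finite {0 :: nat, 1, 2}" by simp
  fix P
  assume "(IS_deviation {0, 1, 2} cyclic_game)\<^sup>*\<^sup>* (singleton_partition {0, 1, 2}) P"
  moreover have "singleton_partition {0, 1, 2} \<in> cyclic_game_reachable"
    by (simp add: singleton_partition_def cyclic_game_reachable_def)
  ultimately show "\<not> individually_stable {0, 1, 2} cyclic_game P"
    using cyclic_game_deviation_closed cyclic_game_deviation_exists
    by (rule reachable_not_individually_stable)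
qed

end
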